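(* Let $g\in\mathrm{Lip}(\mathbb{R})$ satisfy $g(x)\ge g(-1)$ for all $x\in\mathbb{R}$ and $g(x)\ge x+1+g(-1)$ for all $x\in[-1,0]$. For $\varepsilon>0$ let $u^\varepsilon$ be the viscosity solution of $u^\varepsilon_t+u^\varepsilon_x=\varepsilon u^\varepsilon_{xx}$ in $\mathbb{R}\times(0,\infty)$, $u^\varepsilon(\cdot,0)=g$, and let $u$ be the viscosity solution of $u_t+u_x=0$ in $\mathbb{R}\times(0,\infty)$, $u(\cdot,0)=g$. Then for every $\varepsilon\in(0,\tfrac14)$, \[ |u^\varepsilon(0,1)-u(0,1)|=u^\varepsilon(0,1)-g(-1)\ge\frac{\mathrm{e}-1}{\sqrt{\pi}\,\mathrm{e}}\sqrt{\varepsilon}. \] *)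

theory Defs
  imports "HOL-Analysis.Analysis"
begin

text \<open>The arguments phix, phit, phixx
  are the partial derivatives of phi (they are uniquely determined).\<close>

definition test_fun ::
  "(real \<times> real \<Rightarrow> real) \<Rightarrow> (real \<times> real \<Rightarrow> real) \<Rightarrow> (real \<times> real \<Rightarrow> real)
     \<Rightarrow> (real \<times> real \<Rightarrow> real) \<Rightarrow> bool" where
  "test_fun phi phix phit phixx \<longleftrightarrow>
     (\<forall>x t. ((\<lambda>y. phi (y, t)) has_real_derivative phix (x, t)) (at x)) \<and>
     (\<forall>x t. ((\<lambda>s. phi (x, s)) has_real_derivative phit (x, t)) (at t)) \<and>
     (\<forall>x t. ((\<lambda>y. phix (y, t)) has_real_derivative phixx (x, t)) (at x)) \<and>
     continuous_on UNIV phix \<and> continuous_on UNIV phit \<and> continuous_on UNIV phixx"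

definition half_plane :: "(real \<times> real) set" where
  "half_plane = {p. snd p > 0}"

definition loc_max_on :: "(real \<times> real) set \<Rightarrow> (real \<times> real \<Rightarrow> real) \<Rightarrow> real \<times> real \<Rightarrow> bool" where
  "loc_max_on S w p \<longleftrightarrow> (\<exists>r>0. \<forall>q\<in>S. dist q p < r \<longrightarrow> w q \<le> w p)"

definition loc_min_on :: "(real \<times> real) set \<Rightarrow> (real \<times> real \<Rightarrow> real) \<Rightarrow> real \<times> real \<Rightarrow> bool" where
  "loc_min_on S w p \<longleftrightarrow> (\<exists>r>0. \<forall>q\<in>S. dist q p < r \<longrightarrow> w q \<ge> w p)"

text \<open>Solutions are taken in the standard uniqueness class of functions uniformly
  continuous on R \<times> [0,\<infinity>).\<close>
definition visc_sub :: "real \<Rightarrow> (real \<times> real \<Rightarrow> real) \<Rightarrow> bool" where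
  "visc_sub eps u \<longleftrightarrow>
     (\<forall>phi phix phit phixx p. test_fun phi phix phit phixx \<and> p \<in> half_plane \<and>
        loc_max_on half_plane (\<lambda>q. u q - phi q) p \<longrightarrow>
        phit p + phix p - eps * phixx p \<le> 0)"

definition visc_super :: "real \<Rightarrow> (real \<times> real \<Rightarrow> real) \<Rightarrow> bool" where
  "visc_super eps u \<longleftrightarrow>
     (\<forall>phi phix phit phixx p. test_fun phi phix phit phixx \<and> p \<in> half_plane \<and>
        loc_min_on half_plane (\<lambda>q. u q - phi q) p \<longrightarrow>
        phit p + phix p - eps * phixx p \<ge> 0)"

definition visc_solution :: "real \<Rightarrow> (real \<Rightarrow> real) \<Rightarrow> (real \<times> real \<Rightarrow> real) \<Rightarrow> bool" where
  "visc_solution eps g u \<longleftrightarrow>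
     uniformly_continuous_on {p. snd p \<ge> 0} u \<and>
     (\<forall>x. u (x, 0) = g x) \<and>
     visc_sub eps u \<and> visc_super eps u"

end

theory Submission
  imports Defs "HOL-Probability.Distributions" "HOL-Real_Asymp.Real_Asymp"
begin

text \<open>Everything rests on comparing \<open>u\<^sup>\<epsilon>\<close> and \<open>u\<close> with explicit classical solutions.
  Without viscosity the datum is transported, \<open>u(x, t) = g(x - t)\<close>: the smoothed cones
  \<open>g(z\<^sub>0) \<plusminus> L \<surd>((x - t - z\<^sub>0)\<^sup>2 + \<delta>\<^sup>2)\<close> are classical solutions squeezing \<open>u\<close>, so \<open>u(0, 1) = g(-1)\<close>.
  With viscosity \<open>\<epsilon>\<close> the ramp \<open>max z 0\<close> evolves into \<open>W(z, s) = w G(z / w)\<close>, \<open>w = 2 \<surd>(\<epsilon> s)\<close>.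
  For \<open>a = 2 \<surd>\<epsilon> < 1\<close> and \<open>K = a / (1 - a)\<close> the combination
  \<open>g(-1) + W(x - t + 1, t) - (1 + K) W(x - t + 1 - a, t) + K W(x - t, t)\<close> starts below \<open>g\<close>
  (this is where both hypotheses on \<open>g\<close> enter), and the convexity of \<open>G\<close> makes its value at
  \<open>(0, 1)\<close> at least \<open>g(-1) + a (1 - e\<^sup>-\<^sup>1) / (2 \<surd>\<pi>)\<close>. Both comparisons are instances of one
  principle, a classical subsolution of linear growth lies below a uniformly continuous viscosity
  supersolution, proved by penalising with \<open>exp((3 + 2 \<epsilon>) t) (1 + x\<^sup>2) + t\<^sup>2\<close>.\<close>

section \<open>The Gaussian ramp\<close>

text \<open>\<open>gauss_cdf\<close> is the distribution function of a centred normal variable \<open>Y\<close> of variance \<open>1/2\<close>,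
  and \<open>gauss_ramp x\<close> is the expectation of \<open>max (x + Y) 0\<close>.\<close>

definition gauss_integral :: "real \<Rightarrow> real" where
  "gauss_integral x = (LBINT y=0..x. exp (- (y\<^sup>2)))"

definition gauss_cdf :: "real \<Rightarrow> real" where
  "gauss_cdf x = 1/2 + gauss_integral x / sqrt pi"

definition gauss_ramp :: "real \<Rightarrow> real" where
  "gauss_ramp x = x * gauss_cdf x + exp (- (x\<^sup>2)) / (2 * sqrt pi)"

lemma has_real_derivative_gauss_integral:
  "(gauss_integral has_real_derivative exp (- (x\<^sup>2))) (at x)"
proof -
  have "at x within {min 0 (x - 1)..max 0 (x + 1)} = at x"
    by (intro at_within_interior) auto
  moreover have "continuous_on {min 0 (x - 1)..max 0 (x + 1)} (\<lambda>y::real. exp (- (y\<^sup>2)))"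
    by (intro continuous_intros)
  ultimately show ?thesis
    using interval_integral_FTC2[of "min 0 (x - 1)" 0 "max 0 (x + 1)" "\<lambda>y. exp (- (y\<^sup>2))" x]
    by (auto simp: gauss_integral_def[abs_def] zero_ereal_def
        has_real_derivative_iff_has_vector_derivative split del: if_split)
qed

lemma gauss_integral_mono: "x \<le> y \<Longrightarrow> gauss_integral x \<le> gauss_integral y"
  by (rule DERIV_nonneg_imp_nondecreasing) (auto intro!: exI has_real_derivative_gauss_integral)

lemma gauss_integral_minus: "gauss_integral (- x) = - gauss_integral x"
proof -
  have "gauss_integral (- x) = (LBINT y=ereal x..ereal 0. exp (- ((- y)\<^sup>2)))"
    unfolding gauss_integral_def
    using interval_integral_reflect[of "ereal 0" "ereal (- x)" "\<lambda>y. exp (- (y\<^sup>2))"]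
    by (simp add: zero_ereal_def)
  also have "\<dots> = - gauss_integral x"
    unfolding gauss_integral_def
    by (subst interval_integral_endpoints_reverse) (simp add: zero_ereal_def)
  finally show ?thesis .
qed

lemma tendsto_gauss_integral_at_top: "(gauss_integral \<longlongrightarrow> sqrt pi / 2) at_top"
proof -
  have hb: "has_bochner_integral lborel (\<lambda>x::real. indicator {0..} x *\<^sub>R exp (- x\<^sup>2)) (sqrt pi / 2)"
    by (rule gaussian_moment_0)
  then have "set_integrable lborel {0..} (\<lambda>x::real. exp (- x\<^sup>2))"
    unfolding set_integrable_def by (auto simp: integrable.simps)
  then have "((\<lambda>b::real. LINT x:{0..b}|lborel. exp (- x\<^sup>2)) \<longlongrightarrow> (LINT x:{0..}|lborel. exp (- x\<^sup>2))) at_top"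
    by (intro tendsto_set_lebesgue_integral_at_top) auto
  also have "(LINT (x::real):{0..}|lborel. exp (- x\<^sup>2)) = sqrt pi / 2"
    using hb unfolding set_lebesgue_integral_def by (rule has_bochner_integral_integral_eq)
  finally show ?thesis
  proof (rule Lim_transform_eventually)
    show "\<forall>\<^sub>F b in at_top. (LINT x:{0..b}|lborel. exp (- x\<^sup>2)) = gauss_integral b"
      using eventually_ge_at_top[of "0::real"]
      by eventually_elim (simp add: gauss_integral_def interval_integral_Icc[symmetric] zero_ereal_def)
  qed
qed

lemma gauss_integral_le: "gauss_integral x \<le> sqrt pi / 2"
proof (rule tendsto_lowerbound[OF tendsto_gauss_integral_at_top])
  show "\<forall>\<^sub>F y in at_top. gauss_integral x \<le> gauss_integral y"
    using eventually_ge_at_top[of x] by eventually_elim (rule gauss_integral_mono)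
qed simp

lemma gauss_tail_le:
  assumes "0 < x"
  shows "sqrt pi / 2 - gauss_integral x \<le> exp (- (x\<^sup>2)) / (2 * x)"
proof -
  define k where "k y = sqrt pi / 2 - gauss_integral y - exp (- (y\<^sup>2)) / (2 * y)" for y
  have dk: "(k has_real_derivative exp (- (y\<^sup>2)) / (2 * y\<^sup>2)) (at y)" if "0 < y" for y
    unfolding k_def[abs_def] using that
    by (auto intro!: derivative_eq_intros has_real_derivative_gauss_integral
        simp: field_simps power2_eq_square)
  have "(k \<longlongrightarrow> sqrt pi / 2 - sqrt pi / 2 - 0) at_top"
    unfolding k_def[abs_def]
    by (intro tendsto_intros tendsto_gauss_integral_at_top) real_asymp
  then have "(k \<longlongrightarrow> 0) at_top"
    by simp
  moreover have "k x \<le> k y" if "x \<le> y" for y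
    using that assms by (intro DERIV_nonneg_imp_nondecreasing[of x y k]) (auto intro!: exI dk)
  ultimately have "k x \<le> 0"
    by (intro tendsto_lowerbound[of k 0 at_top] eventually_at_top_linorderI) auto
  then show ?thesis unfolding k_def by simp
qed

lemma has_real_derivative_gauss_cdf:
  "(gauss_cdf has_real_derivative exp (- (x\<^sup>2)) / sqrt pi) (at x)"
  using DERIV_add[OF DERIV_const DERIV_cdivide[OF has_real_derivative_gauss_integral]]
  by (simp add: gauss_cdf_def[abs_def])

lemma continuous_on_gauss_cdf [continuous_intros]:
  "continuous_on S f \<Longrightarrow> continuous_on S (\<lambda>x. gauss_cdf (f x))"
  by (rule continuous_on_compose2[of UNIV gauss_cdf])
    (auto intro!: continuous_at_imp_continuous_on DERIV_isCont[OF has_real_derivative_gauss_cdf])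

lemma gauss_cdf_minus: "gauss_cdf (- x) = 1 - gauss_cdf x"
  by (simp add: gauss_cdf_def gauss_integral_minus)

lemma gauss_cdf_nonneg: "0 \<le> gauss_cdf x"
  using gauss_integral_le[of "- x"] by (simp add: gauss_cdf_def gauss_integral_minus field_simps)

lemma has_real_derivative_gauss_ramp: "(gauss_ramp has_real_derivative gauss_cdf x) (at x)"
  unfolding gauss_ramp_def[abs_def]
  by (auto intro!: derivative_eq_intros has_real_derivative_gauss_cdf simp: field_simps)

lemma continuous_on_gauss_ramp [continuous_intros]:
  "continuous_on S f \<Longrightarrow> continuous_on S (\<lambda>x. gauss_ramp (f x))"
  by (rule continuous_on_compose2[of UNIV gauss_ramp])
    (auto intro!: continuous_at_imp_continuous_on DERIV_isCont[OF has_real_derivative_gauss_ramp])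

lemma gauss_ramp_above_tangent: "gauss_cdf y * (x - y) \<le> gauss_ramp x - gauss_ramp y"
  by (rule f''_imp_f'[of UNIV]) (auto intro: has_real_derivative_gauss_ramp has_real_derivative_gauss_cdf)

lemma gauss_ramp_minus: "gauss_ramp (- x) = gauss_ramp x - x"
  by (simp add: gauss_ramp_def gauss_cdf_minus algebra_simps)

lemma gauss_ramp_nonneg: "0 \<le> gauss_ramp x"
proof (cases "0 \<le> x")
  case True
  then show ?thesis
    using gauss_cdf_nonneg[of x] by (simp add: gauss_ramp_def)
next
  case False
  then have "- x * (sqrt pi / 2 - gauss_integral (- x)) \<le> - x * (exp (- (x\<^sup>2)) / (- 2 * x))"
    using gauss_tail_le[of "- x"] by (intro mult_left_mono) auto
  moreover have "sqrt pi * gauss_ramp x = exp (- (x\<^sup>2)) / 2 - - x * (sqrt pi / 2 - gauss_integral (- x))"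
    by (simp add: gauss_ramp_def gauss_cdf_def gauss_integral_minus field_simps)
  ultimately have "0 \<le> sqrt pi * gauss_ramp x"
    using False by (simp add: divide_simps)
  then show ?thesis
    by (simp add: zero_le_mult_iff) (use pi_gt_zero in linarith)
qed

lemma gauss_ramp_ge: "max x 0 \<le> gauss_ramp x"
  using gauss_ramp_nonneg[of x] gauss_ramp_nonneg[of "- x"] gauss_ramp_minus[of x] by linarith

lemma gauss_ramp_le: "gauss_ramp x \<le> max x 0 + 1"
proof -
  have "gauss_ramp y \<le> 1" if "y \<le> 0" for y
  proof -
    have "y * gauss_cdf y \<le> 0"
      using that gauss_cdf_nonneg by (simp add: mult_nonpos_nonneg)
    moreover have "exp (- (y\<^sup>2)) / (2 * sqrt pi) \<le> 1 / (2 * 1)"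
      using pi_gt3 by (intro frac_le) auto
    ultimately show ?thesis
      unfolding gauss_ramp_def by linarith
  qed
  from this[of x] this[of "- x"] show ?thesis
    using gauss_ramp_minus[of x] by linarith
qed

section \<open>Heat evolution of the ramp\<close>

definition heat_width :: "real \<Rightarrow> real \<Rightarrow> real" where
  "heat_width e s = 2 * sqrt (e * s)"

text \<open>For \<open>s > 0\<close>, \<open>heat_ramp e z s\<close> is the solution of \<open>W\<^sub>s = e W\<^sub>z\<^sub>z\<close> with initial datum
  \<open>max z 0\<close>, i.e. the convolution of the ramp with the heat kernel of variance \<open>2 e s\<close>.\<close>

definition heat_ramp :: "real \<Rightarrow> real \<Rightarrow> real \<Rightarrow> real" where
  "heat_ramp e z s = heat_width e s * gauss_ramp (z / heat_width e s)"

definition heat_ramp_z :: "real \<Rightarrow> real \<Rightarrow> real \<Rightarrow> real" where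
  "heat_ramp_z e z s = gauss_cdf (z / heat_width e s)"

definition heat_ramp_zz :: "real \<Rightarrow> real \<Rightarrow> real \<Rightarrow> real" where
  "heat_ramp_zz e z s = exp (- ((z / heat_width e s)\<^sup>2)) / (sqrt pi * heat_width e s)"

definition heat_ramp_ext :: "real \<Rightarrow> real \<Rightarrow> real \<Rightarrow> real" where
  "heat_ramp_ext e z s = (if 0 < s then heat_ramp e z s else max z 0)"

lemma heat_width_pos: "0 < e \<Longrightarrow> 0 < s \<Longrightarrow> 0 < heat_width e s"
  by (simp add: heat_width_def)

lemma heat_width_le: "0 \<le> e \<Longrightarrow> 0 \<le> s \<Longrightarrow> heat_width e s \<le> 1 + e * s"
  using sum_squares_bound[of 1 "sqrt (e * s)"] by (simp add: heat_width_def)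

lemma has_real_derivative_heat_ramp:
  assumes e: "0 < e" and pos: "0 < sf t"
    and zf: "(zf has_real_derivative z') (at t)" and sf: "(sf has_real_derivative s') (at t)"
  shows "((\<lambda>t. heat_ramp e (zf t) (sf t)) has_real_derivative
           z' * heat_ramp_z e (zf t) (sf t) + s' * (e * heat_ramp_zz e (zf t) (sf t))) (at t)"
proof -
  define w where "w = heat_width e (sf t)"
  define \<xi> where "\<xi> = zf t / w"
  have es: "0 < e * sf t"
    using e pos by simp
  have w: "0 < w"
    using heat_width_pos[OF e pos] by (simp add: w_def)
  have dw: "((\<lambda>t. heat_width e (sf t)) has_real_derivative 2 * e * s' / w) (at t)"
  proof -
    have "((\<lambda>t. 2 * sqrt (e * sf t)) has_real_derivative
        2 * (inverse (sqrt (e * sf t)) / 2 * (e * s'))) (at t)"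
      by (intro DERIV_cmult DERIV_chain2[where g="\<lambda>t. e * sf t" and x=t, OF DERIV_real_sqrt[OF es]] DERIV_cmult sf)
    then show ?thesis
      using es by (simp add: heat_width_def w_def field_simps)
  qed
  have "((\<lambda>t. zf t / heat_width e (sf t)) has_real_derivative (z' * w - zf t * (2 * e * s' / w)) / (w * w)) (at t)"
    using DERIV_divide[OF zf dw] w by (simp add: w_def)
  from DERIV_mult'[OF dw DERIV_chain2[OF has_real_derivative_gauss_ramp this]]
  have "((\<lambda>t. heat_width e (sf t) * gauss_ramp (zf t / heat_width e (sf t))) has_real_derivative
      w * (gauss_cdf \<xi> * ((z' * w - zf t * (2 * e * s' / w)) / (w * w))) + 2 * e * s' / w * gauss_ramp \<xi>) (at t)"
    by (simp add: w_def \<xi>_def)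
  moreover have "w * (gauss_cdf \<xi> * ((z' * w - zf t * (2 * e * s' / w)) / (w * w))) + 2 * e * s' / w * gauss_ramp \<xi>
      = z' * gauss_cdf \<xi> + s' * (e * (exp (- (\<xi>\<^sup>2)) / (sqrt pi * w)))"
  proof -
    have zf_eq: "zf t = \<xi> * w"
      using w by (simp add: \<xi>_def)
    show ?thesis
      unfolding zf_eq using w by (simp add: gauss_ramp_def field_simps)
  qed
  ultimately show ?thesis
    by (simp add: heat_ramp_def heat_ramp_z_def heat_ramp_zz_def w_def \<xi>_def)
qed

lemma has_real_derivative_heat_ramp_z:
  assumes "0 < e" "0 < s"
  shows "((\<lambda>z. heat_ramp_z e z s) has_real_derivative heat_ramp_zz e z s) (at z)"
  using DERIV_chain2[OF has_real_derivative_gauss_cdf DERIV_cdivide[OF DERIV_ident, of "heat_width e s"]]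
    heat_width_pos[OF assms] by (simp add: heat_ramp_z_def heat_ramp_zz_def)

lemma heat_ramp_bounds:
  assumes "0 < e" "0 < s"
  shows "max z 0 \<le> heat_ramp e z s" "heat_ramp e z s \<le> max z 0 + heat_width e s"
proof -
  define w where "w = heat_width e s"
  have w: "0 < w"
    using heat_width_pos[OF assms] by (simp add: w_def)
  have "w * max (z / w) 0 = max z 0"
    using w by (simp add: max_def field_simps)
  then show "max z 0 \<le> heat_ramp e z s" "heat_ramp e z s \<le> max z 0 + w"
    using mult_left_mono[OF gauss_ramp_ge[of "z / w"], of w] w
      mult_left_mono[OF gauss_ramp_le[of "z / w"], of w]
    by (simp_all add: heat_ramp_def w_def[symmetric] distrib_left)
qed

lemma heat_ramp_ext_bounds:
  assumes "0 < e" "0 \<le> s"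
  shows "max z 0 \<le> heat_ramp_ext e z s" "heat_ramp_ext e z s \<le> max z 0 + heat_width e s"
  using heat_ramp_bounds[OF assms(1), of s z] assms by (auto simp: heat_ramp_ext_def heat_width_def)

lemma continuous_within_heat_ramp_ext_initial:
  assumes e: "0 < e" and q0: "snd q = 0"
  shows "continuous (at q within {q. 0 \<le> snd q}) (\<lambda>q. heat_ramp_ext e (fst q) (snd q))"
proof -
  let ?S = "{q::real \<times> real. 0 \<le> snd q}"
  have "((\<lambda>r. heat_ramp_ext e (fst r) (snd r) - max (fst r) 0) \<longlongrightarrow> 0) (at q within ?S)"
  proof (rule Lim_null_comparison)
    have "\<bar>heat_ramp_ext e z s - max z 0\<bar> \<le> heat_width e s" if "0 \<le> s" for z s
      using heat_ramp_ext_bounds[OF e that, of z] by simp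
    moreover have "\<forall>\<^sub>F r in at q within ?S. r \<in> ?S"
      by (simp add: eventually_at_filter)
    ultimately show "\<forall>\<^sub>F r in at q within ?S. norm (heat_ramp_ext e (fst r) (snd r) - max (fst r) 0)
        \<le> heat_width e (snd r)"
      by (auto elim: eventually_mono)
    have "((\<lambda>r. heat_width e (snd r)) \<longlongrightarrow> heat_width e (snd q)) (at q within ?S)"
      unfolding heat_width_def by (intro tendsto_intros)
    then show "((\<lambda>r. heat_width e (snd r)) \<longlongrightarrow> 0) (at q within ?S)"
      using q0 by (simp add: heat_width_def)
  qed
  then have "((\<lambda>r. max (fst r) 0 + (heat_ramp_ext e (fst r) (snd r) - max (fst r) 0))
      \<longlongrightarrow> max (fst q) 0 + 0) (at q within ?S)"
    by (intro tendsto_intros)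
  then show ?thesis
    using q0 by (simp add: continuous_within heat_ramp_ext_def)
qed

lemma continuous_on_heat_ramp_ext:
  assumes e: "0 < e"
  shows "continuous_on {q. 0 \<le> snd q} (\<lambda>q. heat_ramp_ext e (fst q) (snd q))"
  unfolding continuous_on_eq_continuous_within
proof
  fix q :: "real \<times> real"
  assume q: "q \<in> {q. 0 \<le> snd q}"
  show "continuous (at q within {q. 0 \<le> snd q}) (\<lambda>q. heat_ramp_ext e (fst q) (snd q))"
  proof (cases "0 < snd q")
    case True
    have "continuous_on {r. 0 < snd r} (\<lambda>r. heat_ramp e (fst r) (snd r))"
      unfolding heat_ramp_def heat_width_def by (intro continuous_intros) (use e in auto)
    then have "isCont (\<lambda>r. heat_ramp e (fst r) (snd r)) q"
      using True by (cases q) (simp add: continuous_on_eq_continuous_at open_Collect_less)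
    then show ?thesis
    proof (rule continuous_transform_within[OF continuous_at_imp_continuous_within True q])
      fix r
      assume "dist r q < snd q"
      then have "0 < snd r"
        using dist_snd_le[of r q] by (simp add: dist_real_def)
      then show "heat_ramp e (fst r) (snd r) = heat_ramp_ext e (fst r) (snd r)"
        by (simp add: heat_ramp_ext_def)
    qed
  next
    case False
    with q e show ?thesis
      by (intro continuous_within_heat_ramp_ext_initial) auto
  qed
qed

lemma heat_ramp_ext_linear_growth:
  assumes e: "0 < e" and q: "0 \<le> snd q"
  shows "heat_ramp_ext e (fst q - snd q + d) (snd q) \<le> (2 + e + \<bar>d\<bar>) * (1 + norm q)"
proof -
  have x: "\<bar>fst q\<bar> \<le> norm q" and t: "snd q \<le> norm q"
    using norm_fst_le[of "fst q" "snd q"] norm_snd_le[of "snd q" "fst q"] by auto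
  have "heat_ramp_ext e (fst q - snd q + d) (snd q) \<le> max (fst q - snd q + d) 0 + (1 + e * snd q)"
    using heat_ramp_ext_bounds(2)[OF e q, of "fst q - snd q + d"] heat_width_le[of e "snd q"] e q by simp
  also have "\<dots> \<le> 2 * norm q + \<bar>d\<bar> + (1 + e * norm q)"
  proof -
    have "fst q - snd q + d \<le> 2 * norm q + \<bar>d\<bar>"
      using x t q abs_ge_self[of "fst q"] abs_ge_self[of d] by linarith
    then have "max (fst q - snd q + d) 0 \<le> 2 * norm q + \<bar>d\<bar>"
      using norm_ge_zero[of q] abs_ge_zero[of d] by simp
    moreover have "e * snd q \<le> e * norm q"
      using t e by simp
    ultimately show ?thesis
      by linarith
  qed
  also have "\<dots> \<le> (2 + e + \<bar>d\<bar>) * (1 + norm q)"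
    using e by (simp add: algebra_simps)
  finally show ?thesis .
qed

section \<open>Functions that are classical solutions after a positive time\<close>

lemma test_fun_const: "test_fun (\<lambda>p. c) (\<lambda>p. 0) (\<lambda>p. 0) (\<lambda>p. 0)"
  unfolding test_fun_def by auto

lemma test_fun_add:
  assumes "test_fun f fx ft fxx" "test_fun g gx gt gxx"
  shows "test_fun (\<lambda>p. f p + g p) (\<lambda>p. fx p + gx p) (\<lambda>p. ft p + gt p) (\<lambda>p. fxx p + gxx p)"
  using assms unfolding test_fun_def by (auto intro!: DERIV_add continuous_intros)

lemma test_fun_cmult:
  assumes "test_fun f fx ft fxx"
  shows "test_fun (\<lambda>p. c * f p) (\<lambda>p. c * fx p) (\<lambda>p. c * ft p) (\<lambda>p. c * fxx p)"
  using assms unfolding test_fun_def by (auto intro!: DERIV_cmult continuous_intros)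

text \<open>\<open>v\<close> coincides on \<open>t \<ge> b\<close> with a test function solving (resp. subsolving) the equation
  classically there; \<open>b > 0\<close> leaves room for functions that are smooth only for \<open>t > 0\<close>.\<close>

definition smooth_solution_after :: "real \<Rightarrow> real \<Rightarrow> (real \<times> real \<Rightarrow> real) \<Rightarrow> bool" where
  "smooth_solution_after e b v \<longleftrightarrow> (\<exists>V Vx Vt Vxx. test_fun V Vx Vt Vxx \<and>
     (\<forall>p. b \<le> snd p \<longrightarrow> V p = v p \<and> Vt p + Vx p - e * Vxx p = 0))"

definition smooth_subsolution_after :: "real \<Rightarrow> real \<Rightarrow> (real \<times> real \<Rightarrow> real) \<Rightarrow> bool" where
  "smooth_subsolution_after e b v \<longleftrightarrow> (\<exists>V Vx Vt Vxx. test_fun V Vx Vt Vxx \<and>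
     (\<forall>p. b \<le> snd p \<longrightarrow> V p = v p \<and> Vt p + Vx p - e * Vxx p \<le> 0))"

lemma smooth_solution_after_imp_subsolution:
  "smooth_solution_after e b v \<Longrightarrow> smooth_subsolution_after e b v"
  unfolding smooth_solution_after_def smooth_subsolution_after_def by fastforce

lemma smooth_solution_after_const: "smooth_solution_after e b (\<lambda>p. c)"
  unfolding smooth_solution_after_def using test_fun_const by fastforce

lemma smooth_solution_after_add:
  assumes "smooth_solution_after e b v" "smooth_solution_after e b w"
  shows "smooth_solution_after e b (\<lambda>p. v p + w p)"
proof -
  obtain V Vx Vt Vxx W Wx Wt Wxx where
    "test_fun V Vx Vt Vxx" "\<forall>p. b \<le> snd p \<longrightarrow> V p = v p \<and> Vt p + Vx p - e * Vxx p = 0"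
    "test_fun W Wx Wt Wxx" "\<forall>p. b \<le> snd p \<longrightarrow> W p = w p \<and> Wt p + Wx p - e * Wxx p = 0"
    using assms unfolding smooth_solution_after_def by blast
  then show ?thesis
    unfolding smooth_solution_after_def
    by (intro exI[of _ "\<lambda>p. V p + W p"] exI[of _ "\<lambda>p. Vx p + Wx p"] exI[of _ "\<lambda>p. Vt p + Wt p"]
        exI[of _ "\<lambda>p. Vxx p + Wxx p"] conjI test_fun_add) (auto simp: algebra_simps)
qed

lemma smooth_solution_after_cmult:
  assumes "smooth_solution_after e b v"
  shows "smooth_solution_after e b (\<lambda>p. c * v p)"
proof -
  obtain V Vx Vt Vxx where
    "test_fun V Vx Vt Vxx" and V: "\<forall>p. b \<le> snd p \<longrightarrow> V p = v p \<and> Vt p + Vx p - e * Vxx p = 0"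
    using assms unfolding smooth_solution_after_def by blast
  moreover have "c * Vt p + c * Vx p - e * (c * Vxx p) = 0" if "b \<le> snd p" for p
  proof -
    have "c * Vt p + c * Vx p - e * (c * Vxx p) = c * (Vt p + Vx p - e * Vxx p)"
      by (simp add: algebra_simps)
    then show ?thesis
      using V that by simp
  qed
  ultimately show ?thesis
    unfolding smooth_solution_after_def
    by (intro exI[of _ "\<lambda>p. c * V p"] exI[of _ "\<lambda>p. c * Vx p"] exI[of _ "\<lambda>p. c * Vt p"]
        exI[of _ "\<lambda>p. c * Vxx p"] conjI test_fun_cmult) auto
qed

lemma smooth_solution_after_diff:
  assumes "smooth_solution_after e b v" "smooth_solution_after e b w"
  shows "smooth_solution_after e b (\<lambda>p. v p - w p)"
  using smooth_solution_after_add[OF assms(1) smooth_solution_after_cmult[OF assms(2), of "-1"]] by simp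

lemma smooth_solution_after_travelling_wave:
  assumes h: "\<And>z. (h has_real_derivative h' z) (at z)"
    and h': "\<And>z. (h' has_real_derivative h'' z) (at z)"
    and h'': "continuous_on UNIV h''"
  shows "smooth_solution_after 0 b (\<lambda>p. h (fst p - snd p))"
  unfolding smooth_solution_after_def
proof (intro exI conjI allI impI)
  have "continuous_on UNIV h'"
    using h' by (intro continuous_at_imp_continuous_on) (auto intro: DERIV_isCont)
  then show "test_fun (\<lambda>p. h (fst p - snd p)) (\<lambda>p. h' (fst p - snd p)) (\<lambda>p. - h' (fst p - snd p))
      (\<lambda>p. h'' (fst p - snd p))"
    unfolding test_fun_def using h''
  proof (intro conjI allI)
    fix x t :: real
    show "((\<lambda>y. h (fst (y, t) - snd (y, t))) has_real_derivative h' (fst (x, t) - snd (x, t))) (at x)"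
      using DERIV_chain2[OF h DERIV_diff[OF DERIV_ident DERIV_const]] by simp
    show "((\<lambda>s. h (fst (x, s) - snd (x, s))) has_real_derivative - h' (fst (x, t) - snd (x, t))) (at t)"
      using DERIV_chain2[OF h DERIV_diff[OF DERIV_const DERIV_ident]] by simp
    show "((\<lambda>y. h' (fst (y, t) - snd (y, t))) has_real_derivative h'' (fst (x, t) - snd (x, t))) (at x)"
      using DERIV_chain2[OF h' DERIV_diff[OF DERIV_ident DERIV_const]] by simp
  qed (auto intro!: continuous_on_compose2[of UNIV h'] continuous_on_compose2[of UNIV h''] continuous_intros)
qed simp_all

lemma smooth_solution_after_transport_cone:
  assumes "0 < \<delta>"
  shows "smooth_solution_after 0 b (\<lambda>p. sqrt ((fst p - snd p - z0)\<^sup>2 + \<delta>\<^sup>2))"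
proof -
  define q where "q z = (z - z0)\<^sup>2 + \<delta>\<^sup>2" for z
  have q: "0 < q z" for z
    using assms by (simp add: q_def add_nonneg_pos)
  have dq: "(q has_real_derivative 2 * (z - z0)) (at z)" for z
    unfolding q_def by (auto intro!: derivative_eq_intros)
  have d1: "((\<lambda>z. sqrt (q z)) has_real_derivative (z - z0) / sqrt (q z)) (at z)" for z
    by (rule DERIV_cong[OF DERIV_chain2[OF DERIV_real_sqrt[OF q] dq]]) (use q[of z] in \<open>simp add: field_simps\<close>)
  have d2: "((\<lambda>z. (z - z0) / sqrt (q z)) has_real_derivative \<delta>\<^sup>2 / (q z * sqrt (q z))) (at z)" for z
  proof -
    have "sqrt (q z) * sqrt (q z) = q z"
      using q[of z] by simp
    then have eq: "((1 - 0) * sqrt (q z) - (z - z0) * ((z - z0) / sqrt (q z))) / (sqrt (q z) * sqrt (q z))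
        = \<delta>\<^sup>2 / (q z * sqrt (q z))"
      using q[of z] by (simp add: q_def field_simps power2_eq_square)
    have "((\<lambda>z. (z - z0) / sqrt (q z)) has_real_derivative
        ((1 - 0) * sqrt (q z) - (z - z0) * ((z - z0) / sqrt (q z))) / (sqrt (q z) * sqrt (q z))) (at z)"
      using q[of z] by (intro DERIV_divide DERIV_diff DERIV_ident DERIV_const d1) simp
    then show ?thesis
      unfolding eq .
  qed
  have "continuous_on UNIV q"
    unfolding q_def by (intro continuous_intros)
  then have "continuous_on UNIV (\<lambda>z. \<delta>\<^sup>2 / (q z * sqrt (q z)))"
    using q by (intro continuous_intros) (auto simp: less_imp_neq[symmetric])
  from smooth_solution_after_travelling_wave[OF d1 d2 this] show ?thesis
    by (simp add: q_def)
qed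

lemma has_real_derivative_min_sq: "((\<lambda>y::real. (min y 0)\<^sup>2) has_real_derivative 2 * min y 0) (at y)"
proof (cases y "0::real" rule: linorder_cases)
  case less
  have "((\<lambda>y::real. y\<^sup>2) has_real_derivative 2 * min y 0) (at y)"
    using less by (auto intro!: derivative_eq_intros)
  then show ?thesis
    by (rule has_field_derivative_transform_within_open[OF _ open_lessThan]) (use less in auto)
next
  case greater
  have "((\<lambda>y::real. 0) has_real_derivative 2 * min y 0) (at y)"
    using greater by simp
  then show ?thesis
    by (rule has_field_derivative_transform_within_open[OF _ open_greaterThan]) (use greater in auto)
next
  case equal
  have "((\<lambda>h::real. ((min (0 + h) 0)\<^sup>2 - (min 0 0)\<^sup>2) / h) \<longlongrightarrow> 0) (at 0)"
  proof (rule Lim_null_comparison)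
    show "\<forall>\<^sub>F h in at 0. norm (((min (0 + h) 0)\<^sup>2 - (min 0 0)\<^sup>2) / h) \<le> \<bar>h\<bar>"
      by (intro always_eventually allI) (auto simp: power2_eq_square abs_mult min_def)
    show "((\<lambda>h::real. \<bar>h\<bar>) \<longlongrightarrow> 0) (at 0)"
      using tendsto_rabs[OF tendsto_ident_at[of "0::real" UNIV]] by simp
  qed
  then show ?thesis
    unfolding equal DERIV_def by simp
qed

text \<open>A \<open>C\<^sup>1\<close> change of time that is the identity on \<open>[b, \<infinity>)\<close> and stays above \<open>b / 2\<close>:
  composing with it turns a solution that is smooth only for \<open>t > 0\<close> into a global test function.\<close>

definition time_lift :: "real \<Rightarrow> real \<Rightarrow> real" where
  "time_lift b t = t + (min (t - b) 0)\<^sup>2 / (2 * b)"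

definition time_lift_deriv :: "real \<Rightarrow> real \<Rightarrow> real" where
  "time_lift_deriv b t = 1 + min (t - b) 0 / b"

lemma has_real_derivative_time_lift:
  assumes "0 < b"
  shows "(time_lift b has_real_derivative time_lift_deriv b t) (at t)"
proof -
  have "((\<lambda>t. (min (t - b) 0)\<^sup>2) has_real_derivative 2 * min (t - b) 0 * 1) (at t)"
    by (rule DERIV_chain2[OF has_real_derivative_min_sq DERIV_diff[OF DERIV_ident DERIV_const, simplified]])
  from DERIV_add[OF DERIV_ident DERIV_cdivide[OF this, of "2 * b"]] show ?thesis
    using assms by (simp add: time_lift_def[abs_def] time_lift_deriv_def)
qed

lemma time_lift_ge: "0 < b \<Longrightarrow> b / 2 \<le> time_lift b t"
  using sum_squares_bound[of t b]
  by (cases "b \<le> t") (auto simp: time_lift_def min_def field_simps power2_eq_square)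

lemma time_lift_eq: "b \<le> t \<Longrightarrow> time_lift b t = t" "b \<le> t \<Longrightarrow> time_lift_deriv b t = 1"
  by (simp_all add: time_lift_def time_lift_deriv_def)

lemma continuous_on_heat_ramp_z:
  assumes "0 < e" "continuous_on S zf" "continuous_on S sf" "\<And>x. x \<in> S \<Longrightarrow> 0 < sf x"
  shows "continuous_on S (\<lambda>x. heat_ramp_z e (zf x) (sf x))"
    and "continuous_on S (\<lambda>x. heat_ramp_zz e (zf x) (sf x))"
  using assms heat_width_pos[OF assms(1)] unfolding heat_ramp_z_def heat_ramp_zz_def heat_width_def
  by (auto intro!: continuous_intros simp: less_imp_neq[symmetric])

lemma test_fun_lifted_heat_ramp:
  fixes d :: real
  assumes e: "0 < e" and b: "0 < b"
  defines "z \<equiv> \<lambda>p. fst p - snd p + d" and "s \<equiv> \<lambda>p. time_lift b (snd p)"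
  shows "test_fun (\<lambda>p. heat_ramp e (z p) (s p)) (\<lambda>p. heat_ramp_z e (z p) (s p))
           (\<lambda>p. time_lift_deriv b (snd p) * (e * heat_ramp_zz e (z p) (s p)) - heat_ramp_z e (z p) (s p))
           (\<lambda>p. heat_ramp_zz e (z p) (s p))"
  unfolding test_fun_def
proof (intro conjI allI)
  fix x t :: real
  have pos: "0 < time_lift b t"
    using time_lift_ge[OF b, of t] b by simp
  show "((\<lambda>y. heat_ramp e (z (y, t)) (s (y, t))) has_real_derivative heat_ramp_z e (z (x, t)) (s (x, t))) (at x)"
    using has_real_derivative_heat_ramp[OF e pos DERIV_add[OF DERIV_diff[OF DERIV_ident DERIV_const] DERIV_const]
        DERIV_const]
    by (simp add: z_def s_def)
  show "((\<lambda>t. heat_ramp e (z (x, t)) (s (x, t))) has_real_derivative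
      time_lift_deriv b (snd (x, t)) * (e * heat_ramp_zz e (z (x, t)) (s (x, t))) - heat_ramp_z e (z (x, t)) (s (x, t))) (at t)"
    using has_real_derivative_heat_ramp[OF e pos DERIV_add[OF DERIV_diff[OF DERIV_const DERIV_ident] DERIV_const]
        has_real_derivative_time_lift[OF b]]
    by (simp add: z_def s_def algebra_simps)
  show "((\<lambda>y. heat_ramp_z e (z (y, t)) (s (y, t))) has_real_derivative heat_ramp_zz e (z (x, t)) (s (x, t))) (at x)"
    using DERIV_chain2[OF has_real_derivative_heat_ramp_z[OF e pos] DERIV_add[OF DERIV_diff[OF DERIV_ident DERIV_const] DERIV_const]]
    by (simp add: z_def s_def)
next
  have cont: "continuous_on UNIV z" "continuous_on UNIV s" "\<And>p. 0 < s p"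
    unfolding z_def s_def time_lift_def using time_lift_ge[OF b] b
    by (auto intro!: continuous_intros simp: time_lift_def less_le_trans[of 0 "b / 2"])
  show "continuous_on UNIV (\<lambda>p. heat_ramp_z e (z p) (s p))"
    and "continuous_on UNIV (\<lambda>p. heat_ramp_zz e (z p) (s p))"
    by (rule continuous_on_heat_ramp_z[OF e cont])+
  then show "continuous_on UNIV
      (\<lambda>p. time_lift_deriv b (snd p) * (e * heat_ramp_zz e (z p) (s p)) - heat_ramp_z e (z p) (s p))"
    unfolding time_lift_deriv_def by (intro continuous_intros) (use b in auto)
qed

lemma smooth_solution_after_heat_ramp:
  assumes "0 < e" "0 < b"
  shows "smooth_solution_after e b (\<lambda>p. heat_ramp_ext e (fst p - snd p + d) (snd p))"
proof -
  define z where "z p = fst p - snd p + d" for p :: "real \<times> real"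
  define s where "s p = time_lift b (snd p)" for p :: "real \<times> real"
  have "test_fun (\<lambda>p. heat_ramp e (z p) (s p)) (\<lambda>p. heat_ramp_z e (z p) (s p))
      (\<lambda>p. time_lift_deriv b (snd p) * (e * heat_ramp_zz e (z p) (s p)) - heat_ramp_z e (z p) (s p))
      (\<lambda>p. heat_ramp_zz e (z p) (s p))"
    unfolding z_def s_def by (rule test_fun_lifted_heat_ramp[OF assms])
  moreover have "heat_ramp e (z p) (s p) = heat_ramp_ext e (fst p - snd p + d) (snd p) \<and>
      (time_lift_deriv b (snd p) * (e * heat_ramp_zz e (z p) (s p)) - heat_ramp_z e (z p) (s p))
        + heat_ramp_z e (z p) (s p) - e * heat_ramp_zz e (z p) (s p) = 0"
    if "b \<le> snd p" for p
    using assms that by (simp add: z_def s_def time_lift_eq heat_ramp_ext_def)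
  ultimately show ?thesis
    unfolding smooth_solution_after_def by blast
qed

section \<open>Comparison with viscosity supersolutions\<close>

lemma uniformly_continuous_on_increments_le:
  fixes f :: "'a::real_normed_vector \<Rightarrow> 'b::real_normed_vector"
  assumes uc: "uniformly_continuous_on S f"
    and star: "\<And>c p. p \<in> S \<Longrightarrow> 0 \<le> c \<Longrightarrow> c \<le> 1 \<Longrightarrow> c *\<^sub>R p \<in> S"
  obtains r where "0 < r" "\<And>n p. p \<in> S \<Longrightarrow> norm p \<le> real n * r \<Longrightarrow> norm (f p - f 0) \<le> real n"
proof -
  obtain d where d: "0 < d" and close: "\<And>p q. p \<in> S \<Longrightarrow> q \<in> S \<Longrightarrow> dist p q < d \<Longrightarrow> dist (f p) (f q) < 1"
    using uc unfolding uniformly_continuous_on_def by (metis zero_less_one)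
  text \<open>Walk from \<open>0\<close> to \<open>p\<close> in \<open>n\<close> steps of length at most \<open>d / 2\<close>.\<close>
  have "norm (f p - f 0) \<le> real n" if "p \<in> S" "norm p \<le> real n * (d / 2)" for n p
    using that
  proof (induction n arbitrary: p)
    case 0
    then show ?case by simp
  next
    case (Suc n)
    define q where "q = (real n / real (Suc n)) *\<^sub>R p"
    have "norm q = real n / real (Suc n) * norm p"
      by (simp add: q_def)
    also have "\<dots> \<le> real n / real (Suc n) * (real (Suc n) * (d / 2))"
      by (rule mult_left_mono[OF Suc.prems(2)]) simp
    finally have IH: "norm (f q - f 0) \<le> real n"
      using Suc.IH Suc.prems(1) star by (simp add: q_def)
    have "p - q = (1 - real n / real (Suc n)) *\<^sub>R p"
      by (simp add: q_def scaleR_diff_left)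
    also have "1 - real n / real (Suc n) = 1 / real (Suc n)"
      by (simp add: field_simps)
    finally have "dist p q = norm p / real (Suc n)"
      by (simp add: dist_norm)
    also have "\<dots> \<le> d / 2"
      using Suc.prems(2) by (simp add: field_simps)
    finally have "dist p q < d"
      using d by simp
    then have "norm (f p - f q) < 1"
      using close[OF Suc.prems(1)] Suc.prems(1) star by (simp add: q_def dist_norm)
    then show ?case
      using IH norm_triangle_ineq[of "f p - f q" "f q - f 0"] by simp
  qed
  with d show thesis
    by (intro that[of "d / 2"]) auto
qed

lemma uniformly_continuous_on_linear_growth:
  fixes f :: "'a::real_normed_vector \<Rightarrow> 'b::real_normed_vector"
  assumes "uniformly_continuous_on S f"
    and "\<And>c p. p \<in> S \<Longrightarrow> 0 \<le> c \<Longrightarrow> c \<le> 1 \<Longrightarrow> c *\<^sub>R p \<in> S"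
  shows "\<exists>C. \<forall>p\<in>S. norm (f p) \<le> C * (1 + norm p)"
proof -
  obtain r where r: "0 < r" and steps: "\<And>n p. p \<in> S \<Longrightarrow> norm p \<le> real n * r \<Longrightarrow> norm (f p - f 0) \<le> real n"
    using uniformly_continuous_on_increments_le[OF assms] by blast
  have "norm (f p) \<le> (norm (f 0) + 1 / r + 1) * (1 + norm p)" if "p \<in> S" for p
  proof -
    define n where "n = nat \<lceil>norm p / r\<rceil>"
    have "norm p / r \<le> real n"
      unfolding n_def by linarith
    then have "norm p \<le> real n * r"
      using r by (simp add: field_simps)
    then have "norm (f p - f 0) \<le> real n"
      using steps that by blast
    moreover have "real n \<le> norm p / r + 1"
      unfolding n_def using r by (simp add: of_nat_nat)
    ultimately have "norm (f p) \<le> norm (f 0) + norm p / r + 1"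
      using norm_triangle_ineq[of "f p - f 0" "f 0"] by simp
    also have "\<dots> \<le> (norm (f 0) + 1 / r + 1) * (1 + norm p)"
      using r by (simp add: algebra_simps mult_left_le)
    finally show ?thesis .
  qed
  then show ?thesis
    by blast
qed

lemma linear_minus_square_le:
  fixes D \<gamma> y :: real
  assumes "0 < \<gamma>"
  shows "D * y - \<gamma> * y\<^sup>2 \<le> D\<^sup>2 / (4 * \<gamma>)"
proof -
  have "(D * y - \<gamma> * y\<^sup>2) * (4 * \<gamma>) = D\<^sup>2 - (D - 2 * \<gamma> * y)\<^sup>2"
    by (simp add: algebra_simps power2_eq_square)
  also have "\<dots> \<le> D\<^sup>2"
    by simp
  finally show ?thesis
    using assms by (simp add: pos_le_divide_eq)
qed

lemma linear_minus_square_eventually_neg: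
  fixes C D \<gamma> :: real
  assumes "0 < \<gamma>"
  shows "\<exists>R\<ge>0. \<forall>y. R < \<bar>y\<bar> \<longrightarrow> C + D * \<bar>y\<bar> - \<gamma> * y\<^sup>2 < 0"
proof (intro exI conjI allI impI)
  define R where "R = (\<bar>C\<bar> + \<bar>D\<bar>) / \<gamma> + 1"
  show "0 \<le> R"
    using assms by (simp add: R_def)
  fix y :: real
  assume y: "R < \<bar>y\<bar>"
  have "0 \<le> (\<bar>C\<bar> + \<bar>D\<bar>) / \<gamma>"
    using assms by simp
  with y have "1 < \<bar>y\<bar>"
    by (simp add: R_def)
  have "\<bar>C\<bar> + \<bar>D\<bar> < \<gamma> * \<bar>y\<bar>"
    using y assms by (simp add: R_def field_simps)
  then have "(\<bar>C\<bar> + \<bar>D\<bar>) * \<bar>y\<bar> < \<gamma> * \<bar>y\<bar> * \<bar>y\<bar>"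
    using \<open>1 < \<bar>y\<bar>\<close> by (intro mult_strict_right_mono) auto
  moreover have "C + D * \<bar>y\<bar> \<le> (\<bar>C\<bar> + \<bar>D\<bar>) * \<bar>y\<bar>"
  proof -
    have "C \<le> \<bar>C\<bar> * \<bar>y\<bar>"
      using mult_left_mono[of 1 "\<bar>y\<bar>" "\<bar>C\<bar>"] \<open>1 < \<bar>y\<bar>\<close> abs_ge_self[of C] by simp
    moreover have "D * \<bar>y\<bar> \<le> \<bar>D\<bar> * \<bar>y\<bar>"
      by (simp add: mult_right_mono)
    ultimately show ?thesis
      by (simp add: distrib_right)
  qed
  ultimately show "C + D * \<bar>y\<bar> - \<gamma> * y\<^sup>2 < 0"
    by (simp add: power2_eq_square abs_mult_self_eq mult.assoc)
qed

lemma continuous_attains_sup_off_compact: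
  fixes f :: "'a::topological_space \<Rightarrow> real"
  assumes "compact K" "continuous_on K f" "p0 \<in> K" "\<And>q. q \<in> S \<Longrightarrow> q \<notin> K \<Longrightarrow> f q \<le> f p0"
  shows "\<exists>p\<in>K. \<forall>q\<in>K \<union> S. f q \<le> f p"
proof -
  obtain p where "p \<in> K" "\<forall>q\<in>K. f q \<le> f p"
    using continuous_attains_sup[OF assms(1) _ assms(2)] assms(3) by blast
  with assms(3,4) show ?thesis
    by (meson Un_iff order_trans)
qed

lemma half_plane_attains_max:
  fixes f :: "real \<times> real \<Rightarrow> real"
  assumes cont: "continuous_on {p. 0 \<le> snd p} f" and \<gamma>: "0 < \<gamma>"
    and bound: "\<And>p. 0 \<le> snd p \<Longrightarrow> f p \<le> C + D * (\<bar>fst p\<bar> + snd p) - \<gamma> * ((fst p)\<^sup>2 + (snd p)\<^sup>2)"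
  shows "\<exists>p. 0 \<le> snd p \<and> (\<forall>q. 0 \<le> snd q \<longrightarrow> f q \<le> f p)"
proof -
  define M where "M = D\<^sup>2 / (4 * \<gamma>)"
  obtain R where "0 \<le> R" and R: "\<And>y. R < \<bar>y\<bar> \<Longrightarrow> C + M - f (0, 0) + D * \<bar>y\<bar> - \<gamma> * y\<^sup>2 < 0"
    using linear_minus_square_eventually_neg[OF \<gamma>] by blast
  have outside: "f q \<le> f (0, 0)" if "0 \<le> snd q" "q \<notin> {-R..R} \<times> {0..R}" for q
  proof -
    have "R < \<bar>fst q\<bar> \<or> R < \<bar>snd q\<bar>"
      using that by (cases q) auto
    moreover have "D * \<bar>fst q\<bar> - \<gamma> * (fst q)\<^sup>2 \<le> M" "D * \<bar>snd q\<bar> - \<gamma> * (snd q)\<^sup>2 \<le> M"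
      unfolding M_def using linear_minus_square_le[OF \<gamma>] by (metis power2_abs)+
    ultimately show ?thesis
      using bound[OF that(1)] R[of "fst q"] R[of "snd q"] \<open>0 \<le> snd q\<close>
      by (auto simp: algebra_simps)
  qed
  have "{-R..R} \<times> {0..R} \<subseteq> {p. 0 \<le> snd p}"
    by auto
  then obtain p where "p \<in> {-R..R} \<times> {0..R}" "\<forall>q\<in>({-R..R} \<times> {0..R}) \<union> {p. 0 \<le> snd p}. f q \<le> f p"
    using continuous_attains_sup_off_compact[of "{-R..R} \<times> {0..R}" f "(0, 0)" "{p. 0 \<le> snd p}"]
      outside \<open>0 \<le> R\<close> continuous_on_subset[OF cont] compact_Times[OF compact_Icc compact_Icc] by auto
  then have "0 \<le> snd p" "\<forall>q. 0 \<le> snd q \<longrightarrow> f q \<le> f p"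
    by (auto simp: mem_Times_iff)
  then show ?thesis
    by blast
qed

lemma visc_super_touched_below:
  assumes "visc_super e w" "test_fun phi phix phit phixx" "0 < snd p" "0 < r"
    and "\<And>q. 0 < snd q \<Longrightarrow> dist q p < r \<Longrightarrow> phi q - w q \<le> phi p - w p"
  shows "0 \<le> phit p + phix p - e * phixx p"
proof -
  have "loc_min_on half_plane (\<lambda>q. w q - phi q) p"
    unfolding loc_min_on_def half_plane_def using assms(4,5) by (auto intro!: exI[of _ r] simp: algebra_simps)
  moreover have "p \<in> half_plane"
    using assms(3) by (simp add: half_plane_def)
  ultimately show ?thesis
    using assms(1,2) unfolding visc_super_def by blast
qed

text \<open>The weight \<open>3 + 2 e\<close> in the exponent makes the penalty a strict classical supersolution:
  \<open>(3 + 2 e) (1 + x\<^sup>2) + 2 x - 2 e \<ge> 2 + 2 x\<^sup>2 + (1 + x)\<^sup>2\<close>.\<close>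

definition penalty :: "real \<Rightarrow> real \<times> real \<Rightarrow> real" where
  "penalty e p = exp ((3 + 2 * e) * snd p) * (1 + (fst p)\<^sup>2) + (snd p)\<^sup>2"

lemma penalty_strict_supersolution:
  assumes "0 \<le> e"
  shows "\<exists>Px Pt Pxx. test_fun (penalty e) Px Pt Pxx \<and> (\<forall>p. 0 \<le> snd p \<longrightarrow> 0 < Pt p + Px p - e * Pxx p)"
proof (intro exI conjI allI impI)
  define K where "K = 3 + 2 * e"
  show "test_fun (penalty e) (\<lambda>p. exp (K * snd p) * (2 * fst p))
      (\<lambda>p. K * exp (K * snd p) * (1 + (fst p)\<^sup>2) + 2 * snd p) (\<lambda>p. exp (K * snd p) * 2)"
    unfolding test_fun_def penalty_def K_def[symmetric]
    by (auto intro!: derivative_eq_intros continuous_intros)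
  fix p :: "real \<times> real"
  assume t: "0 \<le> snd p"
  have "0 < 2 + 2 * (fst p)\<^sup>2 + (1 + fst p)\<^sup>2 + 2 * e * (fst p)\<^sup>2"
    using assms by (simp add: add_pos_nonneg)
  also have "\<dots> = K * (1 + (fst p)\<^sup>2) + 2 * fst p - 2 * e"
    by (simp add: K_def power2_eq_square algebra_simps)
  finally have "0 < exp (K * snd p) * (K * (1 + (fst p)\<^sup>2) + 2 * fst p - 2 * e) + 2 * snd p"
    using t by (simp add: add_pos_nonneg)
  then show "0 < K * exp (K * snd p) * (1 + (fst p)\<^sup>2) + 2 * snd p + exp (K * snd p) * (2 * fst p)
      - e * (exp (K * snd p) * 2)"
    by (simp add: algebra_simps)
qed

lemma penalty_lower:
  assumes "0 \<le> e" "0 \<le> snd p"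
  shows "(fst p)\<^sup>2 + (snd p)\<^sup>2 < penalty e p"
proof -
  have "1 * (1 + (fst p)\<^sup>2) \<le> exp ((3 + 2 * e) * snd p) * (1 + (fst p)\<^sup>2)"
    using assms by (intro mult_right_mono) auto
  then show ?thesis
    by (simp add: penalty_def)
qed

lemma penalized_difference_attains_max:
  fixes v w :: "real \<times> real \<Rightarrow> real"
  assumes e: "0 \<le> e" and \<gamma>: "0 < \<gamma>"
    and w_uc: "uniformly_continuous_on {p. 0 \<le> snd p} w"
    and v_cont: "continuous_on {p. 0 \<le> snd p} v"
    and v_growth: "\<exists>C. \<forall>p. 0 \<le> snd p \<longrightarrow> v p \<le> C * (1 + norm p)"
  shows "\<exists>ps. 0 \<le> snd ps \<and>
           (\<forall>q. 0 \<le> snd q \<longrightarrow> v q - w q - \<gamma> * penalty e q \<le> v ps - w ps - \<gamma> * penalty e ps)"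
proof -
  let ?H = "{p :: real \<times> real. 0 \<le> snd p}"
  obtain Cw where Cw: "\<forall>p\<in>?H. norm (w p) \<le> Cw * (1 + norm p)"
    using uniformly_continuous_on_linear_growth[OF w_uc] by fastforce
  obtain Cv where Cv: "\<forall>p. 0 \<le> snd p \<longrightarrow> v p \<le> Cv * (1 + norm p)"
    using v_growth by blast
  define D where "D = \<bar>Cv\<bar> + \<bar>Cw\<bar>"
  have bound: "v q - w q - \<gamma> * penalty e q \<le> D + D * (\<bar>fst q\<bar> + snd q) - \<gamma> * ((fst q)\<^sup>2 + (snd q)\<^sup>2)"
    if q: "0 \<le> snd q" for q
  proof -
    have "v q \<le> Cv * (1 + norm q)" "\<bar>w q\<bar> \<le> Cw * (1 + norm q)"
      using Cv Cw q by (simp_all del: split_paired_All)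
    then have "v q - w q \<le> (Cv + Cw) * (1 + norm q)"
      by (simp only: distrib_right)
    also have "\<dots> \<le> D * (1 + (\<bar>fst q\<bar> + snd q))"
      using norm_Pair_le[of "fst q" "snd q"] q unfolding D_def
      by (intro mult_mono) auto
    moreover have "\<gamma> * ((fst q)\<^sup>2 + (snd q)\<^sup>2) \<le> \<gamma> * penalty e q"
      using penalty_lower[OF e q] \<gamma> by (intro mult_left_mono) auto
    ultimately show ?thesis
      by (simp add: distrib_left)
  qed
  have "continuous_on ?H (\<lambda>q. v q - w q - \<gamma> * penalty e q)"
    unfolding penalty_def
    by (intro continuous_intros v_cont uniformly_continuous_imp_continuous[OF w_uc])
  from half_plane_attains_max[OF this \<gamma> bound] show ?thesis .
qed

text \<open>At an interior maximum of \<open>v - w - \<gamma> P\<close>, the function \<open>v - \<gamma> P\<close> would be a strict classical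
  subsolution touching \<open>w\<close> from below.\<close>

lemma visc_super_no_max_against_strict_sub:
  assumes w_super: "visc_super e w" and ps: "0 < snd ps" and \<gamma>: "0 < \<gamma>"
    and v_sub: "smooth_subsolution_after e (snd ps / 2) v"
    and P: "test_fun P Px Pt Pxx" and P_super: "0 < Pt ps + Px ps - e * Pxx ps"
    and max: "\<And>q. 0 < snd q \<Longrightarrow> v q - w q - \<gamma> * P q \<le> v ps - w ps - \<gamma> * P ps"
  shows False
proof -
  define b where "b = snd ps / 2"
  have b: "0 < b" "b \<le> snd ps"
    using ps by (simp_all add: b_def)
  obtain V Vx Vt Vxx where V: "test_fun V Vx Vt Vxx"
    and V_eq: "\<And>p. b \<le> snd p \<Longrightarrow> V p = v p" and V_sub: "\<And>p. b \<le> snd p \<Longrightarrow> Vt p + Vx p - e * Vxx p \<le> 0"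
    using v_sub unfolding smooth_subsolution_after_def b_def by blast
  have "0 \<le> (Vt ps + (- \<gamma>) * Pt ps) + (Vx ps + (- \<gamma>) * Px ps) - e * (Vxx ps + (- \<gamma>) * Pxx ps)"
  proof (rule visc_super_touched_below[OF w_super test_fun_add[OF V test_fun_cmult[OF P]] ps b(1)])
    fix q :: "real \<times> real"
    assume "0 < snd q" "dist q ps < b"
    then have "b \<le> snd q"
      using dist_snd_le[of q ps] by (simp add: b_def dist_real_def)
    then show "V q + - \<gamma> * P q - w q \<le> V ps + - \<gamma> * P ps - w ps"
      using max[OF \<open>0 < snd q\<close>] V_eq b(2) by simp
  qed
  moreover have "0 < \<gamma> * (Pt ps + Px ps - e * Pxx ps)"
    using \<gamma> P_super by simp
  ultimately show False
    using V_sub[OF b(2)] by (simp add: algebra_simps)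
qed

lemma comparison:
  fixes v w :: "real \<times> real \<Rightarrow> real"
  assumes e: "0 \<le> e"
    and w_uc: "uniformly_continuous_on {p. 0 \<le> snd p} w" and w_super: "visc_super e w"
    and v_cont: "continuous_on {p. 0 \<le> snd p} v"
    and v_sub: "\<And>b. 0 < b \<Longrightarrow> smooth_subsolution_after e b v"
    and v_growth: "\<exists>C. \<forall>p. 0 \<le> snd p \<longrightarrow> v p \<le> C * (1 + norm p)"
    and initial: "\<And>x. v (x, 0) \<le> w (x, 0)"
    and p0: "0 \<le> snd p0"
  shows "v p0 \<le> w p0"
proof (rule ccontr)
  assume "\<not> v p0 \<le> w p0"
  have pen0: "0 < penalty e p0"
    by (rule le_less_trans[OF _ penalty_lower[OF e p0]]) simp
  define \<gamma> where "\<gamma> = (v p0 - w p0) / (2 * penalty e p0)"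
  have \<gamma>: "0 < \<gamma>"
    using \<open>\<not> v p0 \<le> w p0\<close> pen0 by (simp add: \<gamma>_def)
  have "0 < v p0 - w p0 - \<gamma> * penalty e p0"
    using \<open>\<not> v p0 \<le> w p0\<close> pen0 by (simp add: \<gamma>_def)
  obtain ps where ps: "0 \<le> snd ps"
    and max: "\<And>q. 0 \<le> snd q \<Longrightarrow> v q - w q - \<gamma> * penalty e q \<le> v ps - w ps - \<gamma> * penalty e ps"
    using penalized_difference_attains_max[OF e \<gamma> w_uc v_cont v_growth] by blast
  have "0 < snd ps"
  proof (rule ccontr)
    assume "\<not> 0 < snd ps"
    then have "v ps \<le> w ps"
      using ps initial[of "fst ps"] by (cases ps) simp
    moreover have "0 < \<gamma> * penalty e ps"
      using \<gamma> le_less_trans[OF _ penalty_lower[OF e ps]] by simp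
    ultimately show False
      using max[OF p0] \<open>0 < v p0 - w p0 - \<gamma> * penalty e p0\<close> by simp
  qed
  obtain Px Pt Pxx where P: "test_fun (penalty e) Px Pt Pxx"
    and P_super: "\<And>p. 0 \<le> snd p \<Longrightarrow> 0 < Pt p + Px p - e * Pxx p"
    using penalty_strict_supersolution[OF e] by blast
  have "smooth_subsolution_after e (snd ps / 2) v"
    using v_sub \<open>0 < snd ps\<close> by simp
  moreover have "\<And>q. 0 < snd q \<Longrightarrow> v q - w q - \<gamma> * penalty e q \<le> v ps - w ps - \<gamma> * penalty e ps"
    using max by simp
  ultimately show False
    by (rule visc_super_no_max_against_strict_sub[OF w_super \<open>0 < snd ps\<close> \<gamma> _ P P_super[OF ps]])
qed

lemma linear_growth_if_bounded_above:
  assumes "\<And>p. 0 \<le> snd p \<Longrightarrow> v p \<le> c"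
  shows "\<exists>C. \<forall>p. 0 \<le> snd p \<longrightarrow> v p \<le> C * (1 + norm (p :: real \<times> real))"
proof (intro exI allI impI)
  fix p :: "real \<times> real"
  assume "0 \<le> snd p"
  have "\<bar>c\<bar> * 1 \<le> \<bar>c\<bar> * (1 + norm p)"
    by (intro mult_left_mono) auto
  then show "v p \<le> \<bar>c\<bar> * (1 + norm p)"
    using assms[OF \<open>0 \<le> snd p\<close>] by linarith
qed

lemma loc_min_on_uminus_iff: "loc_min_on S (\<lambda>q. - f q) p \<longleftrightarrow> loc_max_on S f p"
  by (simp add: loc_min_on_def loc_max_on_def)

lemma visc_super_uminus_iff: "visc_super e (\<lambda>p. - u p) \<longleftrightarrow> visc_sub e u"
proof -
  have test_fun_uminus: "test_fun (\<lambda>p. - phi p) (\<lambda>p. - phix p) (\<lambda>p. - phit p) (\<lambda>p. - phixx p)"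
    if "test_fun phi phix phit phixx" for phi phix phit phixx
    using test_fun_cmult[OF that, of "-1"] by simp
  show ?thesis
    unfolding visc_sub_def visc_super_def
  proof (intro iffI allI impI)
    fix phi phix phit phixx p
    assume super: "\<forall>phi phix phit phixx p. test_fun phi phix phit phixx \<and> p \<in> half_plane \<and>
        loc_min_on half_plane (\<lambda>q. - u q - phi q) p \<longrightarrow> 0 \<le> phit p + phix p - e * phixx p"
      and h: "test_fun phi phix phit phixx \<and> p \<in> half_plane \<and> loc_max_on half_plane (\<lambda>q. u q - phi q) p"
    then have "loc_min_on half_plane (\<lambda>q. - u q - - phi q) p"
      using loc_min_on_uminus_iff[of half_plane "\<lambda>q. u q - phi q" p] by simp
    then have "0 \<le> - phit p + - phix p - e * - phixx p"
      using super test_fun_uminus h by blast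
    then show "phit p + phix p - e * phixx p \<le> 0"
      by simp
  next
    fix phi phix phit phixx p
    assume sub: "\<forall>phi phix phit phixx p. test_fun phi phix phit phixx \<and> p \<in> half_plane \<and>
        loc_max_on half_plane (\<lambda>q. u q - phi q) p \<longrightarrow> phit p + phix p - e * phixx p \<le> 0"
      and h: "test_fun phi phix phit phixx \<and> p \<in> half_plane \<and> loc_min_on half_plane (\<lambda>q. - u q - phi q) p"
    then have "loc_max_on half_plane (\<lambda>q. u q - - phi q) p"
      using loc_min_on_uminus_iff[of half_plane "\<lambda>q. u q - - phi q" p] by simp
    then have "- phit p + - phix p - e * - phixx p \<le> 0"
      using sub test_fun_uminus h by blast
    then show "0 \<le> phit p + phix p - e * phixx p"
      by simp
  qed
qed

lemma visc_solution_uminus: "visc_solution e g u \<Longrightarrow> visc_solution e (\<lambda>x. - g x) (\<lambda>p. - u p)"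
  using visc_super_uminus_iff[of e u] visc_super_uminus_iff[of e "\<lambda>p. - u p"]
  by (simp add: visc_solution_def uniformly_continuous_on_minus)

section \<open>The transport equation\<close>

lemma transport_visc_solution_ge:
  assumes sol: "visc_solution 0 g u" and lip: "L-lipschitz_on UNIV g" and p: "0 \<le> snd p"
  shows "g (fst p - snd p) \<le> u p"
proof (rule field_le_epsilon)
  fix \<epsilon> :: real
  assume "0 < \<epsilon>"
  define z0 where "z0 = fst p - snd p"
  define \<delta> where "\<delta> = \<epsilon> / (L + 1)"
  have L: "0 \<le> L"
    using lip by (rule lipschitz_on_nonneg)
  have \<delta>: "0 < \<delta>" "L * \<delta> \<le> \<epsilon>"
    using \<open>0 < \<epsilon>\<close> L by (simp_all add: \<delta>_def field_simps)
  define v where "v q = g z0 - L * sqrt ((fst q - snd q - z0)\<^sup>2 + \<delta>\<^sup>2)" for q :: "real \<times> real"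
  have "v p \<le> u p"
  proof (rule comparison[of 0])
    show "uniformly_continuous_on {p. 0 \<le> snd p} u" "visc_super 0 u"
      using sol by (simp_all add: visc_solution_def)
    show "continuous_on {p. 0 \<le> snd p} v"
      unfolding v_def by (intro continuous_intros)
    show "smooth_subsolution_after 0 b v" for b
      unfolding v_def
      by (intro smooth_solution_after_imp_subsolution smooth_solution_after_diff smooth_solution_after_const
          smooth_solution_after_cmult smooth_solution_after_transport_cone \<delta>(1))
    show "\<exists>C. \<forall>p. 0 \<le> snd p \<longrightarrow> v p \<le> C * (1 + norm p)"
      using L by (intro linear_growth_if_bounded_above[of _ "g z0"]) (simp add: v_def)
    show "v (x, 0) \<le> u (x, 0)" for x
    proof -
      have "g z0 - g x \<le> L * \<bar>x - z0\<bar>"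
        using lipschitz_onD[OF lip, of z0 x] by (simp add: dist_real_def abs_minus_commute)
      also have "\<dots> \<le> L * sqrt ((x - z0)\<^sup>2 + \<delta>\<^sup>2)"
        using L by (intro mult_left_mono real_le_rsqrt) auto
      finally show ?thesis
        using sol by (simp add: v_def visc_solution_def)
    qed
  qed (use p in simp_all)
  moreover have "v p = g z0 - L * \<delta>"
    using \<delta>(1) by (simp add: v_def z0_def)
  ultimately show "g (fst p - snd p) \<le> u p + \<epsilon>"
    using \<delta>(2) by (simp add: z0_def)
qed

lemma transport_visc_solution_eq:
  assumes "visc_solution 0 g u" "L-lipschitz_on UNIV g" "0 \<le> snd p"
  shows "u p = g (fst p - snd p)"
  using transport_visc_solution_ge[OF assms]
    transport_visc_solution_ge[OF visc_solution_uminus[OF assms(1)] _ assms(3), of L] assms(2)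
  by simp

section \<open>The viscous lower bound\<close>

lemma ramp_combination_le_initial:
  fixes g :: "real \<Rightarrow> real"
  assumes a: "0 < a" "a < 1" and K_def: "K = a / (1 - a)"
    and g_min: "\<forall>x. g x \<ge> g (-1)" and g_lin: "\<forall>x\<in>{-1..0}. g x \<ge> x + 1 + g (-1)"
  shows "g (-1) + max (x + 1) 0 - (1 + K) * max (x + 1 - a) 0 + K * max x 0 \<le> g x"
proof -
  have K: "K * (1 - a) = a" "0 \<le> K"
    using a by (simp_all add: K_def)
  consider "x < -1" | "-1 \<le> x" "x \<le> a - 1" | "a - 1 < x" "x \<le> 0" | "0 < x"
    by linarith
  then show ?thesis
  proof cases
    case 1
    then show ?thesis
      using g_min a by (simp add: max_def)
  next
    case 2
    then have "x + 1 + g (-1) \<le> g x"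
      using g_lin a by simp
    with 2 show ?thesis
      using a by (simp add: max_def)
  next
    case 3
    then have "x \<in> {-1..0}"
      using a by simp
    then have "x + 1 + g (-1) \<le> g x"
      using g_lin by blast
    moreover have "0 \<le> (1 + K) * (x + 1 - a)"
      using 3 K(2) by simp
    ultimately show ?thesis
      using 3 a by (simp add: max_def)
  next
    case 4
    then show ?thesis
      using g_min a K(1) by (simp add: max_def algebra_simps)
  qed
qed

lemma gauss_ramp_combination_ge:
  assumes a: "0 < a" "a < 1" and K_def: "K = a / (1 - a)"
  shows "(1 - exp (- 1)) / (2 * sqrt pi) \<le> gauss_ramp 0 - (1 + K) * gauss_ramp (- 1) + K * gauss_ramp (- 1 / a)"
proof -
  have K: "K * (1 - a) = a" "0 \<le> K"
    using a by (simp_all add: K_def)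
  have "K * (gauss_cdf (- 1) * (- 1 / a - - 1)) \<le> K * (gauss_ramp (- 1 / a) - gauss_ramp (- 1))"
    using gauss_ramp_above_tangent K(2) by (rule mult_left_mono)
  moreover have "K * (- 1 / a - - 1) = - (K * (1 - a)) / a"
    using a by (simp add: field_simps)
  then have "K * (- 1 / a - - 1) = - 1"
    using a K(1) by simp
  then have "K * (gauss_cdf (- 1) * (- 1 / a - - 1)) = - gauss_cdf (- 1)"
    by (metis mult.left_commute mult_minus1_right)
  ultimately have tangent: "- gauss_cdf (- 1) \<le> K * (gauss_ramp (- 1 / a) - gauss_ramp (- 1))"
    by simp
  have "gauss_ramp 0 = 1 / (2 * sqrt pi)" "gauss_ramp (- 1) = - gauss_cdf (- 1) + exp (- 1) / (2 * sqrt pi)"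
    by (simp_all add: gauss_ramp_def)
  moreover have "(1 - exp (- 1)) / (2 * sqrt pi) = 1 / (2 * sqrt pi) - exp (- 1) / (2 * sqrt pi)"
    by (simp add: diff_divide_distrib)
  moreover have "gauss_ramp 0 - (1 + K) * gauss_ramp (- 1) + K * gauss_ramp (- 1 / a)
      = gauss_ramp 0 - gauss_ramp (- 1) + K * (gauss_ramp (- 1 / a) - gauss_ramp (- 1))"
    by (simp add: algebra_simps)
  ultimately show ?thesis
    using tangent by linarith
qed

lemma heat_ramp_combination_linear_growth:
  assumes e: "0 < e" and K: "0 \<le> K" and q: "0 \<le> snd q"
  shows "c + heat_ramp_ext e (fst q - snd q + 1) (snd q) - (1 + K) * heat_ramp_ext e (fst q - snd q + d) (snd q)
           + K * heat_ramp_ext e (fst q - snd q + 0) (snd q) \<le> (\<bar>c\<bar> + (3 + e) + K * (2 + e)) * (1 + norm q)"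
proof -
  have "c \<le> \<bar>c\<bar> * (1 + norm q)"
    using mult_left_mono[of 1 "1 + norm q" "\<bar>c\<bar>"] by simp
  moreover have "heat_ramp_ext e (fst q - snd q + 1) (snd q) \<le> (3 + e) * (1 + norm q)"
    using heat_ramp_ext_linear_growth[OF e q, of 1] by simp
  moreover have "0 \<le> (1 + K) * heat_ramp_ext e (fst q - snd q + d) (snd q)"
    using heat_ramp_ext_bounds(1)[OF e q, of "fst q - snd q + d"] K by simp
  moreover have "K * heat_ramp_ext e (fst q - snd q + 0) (snd q) \<le> K * ((2 + e) * (1 + norm q))"
    using heat_ramp_ext_linear_growth[OF e q, of 0] K by (simp add: mult_left_mono)
  ultimately show ?thesis
    by (simp add: algebra_simps)
qed

lemma ramp_combination_le_visc_solution:
  fixes g :: "real \<Rightarrow> real"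
  assumes sol: "visc_solution e g w" and e: "0 < e"
    and a: "0 < a" "a < 1" and K_def: "K = a / (1 - a)"
    and g_min: "\<forall>x. g x \<ge> g (-1)" and g_lin: "\<forall>x\<in>{-1..0}. g x \<ge> x + 1 + g (-1)"
    and p: "0 \<le> snd p"
  shows "g (-1) + heat_ramp_ext e (fst p - snd p + 1) (snd p) - (1 + K) * heat_ramp_ext e (fst p - snd p + (1 - a)) (snd p)
           + K * heat_ramp_ext e (fst p - snd p + 0) (snd p) \<le> w p"
proof -
  have K: "K * (1 - a) = a" "0 \<le> K"
    using a by (simp_all add: K_def)
  define R where "R d q = heat_ramp_ext e (fst q - snd q + d) (snd q)" for d and q :: "real \<times> real"
  define v where "v q = g (-1) + R 1 q - (1 + K) * R (1 - a) q + K * R 0 q" for q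
  have "v p \<le> w p"
  proof (rule comparison[of e])
    show "uniformly_continuous_on {p. 0 \<le> snd p} w" "visc_super e w"
      using sol by (simp_all add: visc_solution_def)
    have "continuous_on {q. 0 \<le> snd q} (R d)" for d
    proof -
      have "continuous_on {q. 0 \<le> snd q} (\<lambda>q. (\<lambda>r. heat_ramp_ext e (fst r) (snd r)) (fst q - snd q + d, snd q))"
        by (rule continuous_on_compose2[OF continuous_on_heat_ramp_ext[OF e]]) (auto intro!: continuous_intros)
      then show ?thesis
        by (simp add: R_def)
    qed
    then show "continuous_on {q. 0 \<le> snd q} v"
      unfolding v_def by (intro continuous_intros) auto
    show "smooth_subsolution_after e b v" if "0 < b" for b
      unfolding v_def R_def
      by (intro smooth_solution_after_imp_subsolution smooth_solution_after_add smooth_solution_after_diff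
          smooth_solution_after_const smooth_solution_after_cmult smooth_solution_after_heat_ramp e that)
    show "\<exists>C. \<forall>p. 0 \<le> snd p \<longrightarrow> v p \<le> C * (1 + norm p)"
      using heat_ramp_combination_linear_growth[OF e K(2)] unfolding v_def R_def by blast
    show "v (x, 0) \<le> w (x, 0)" for x
    proof -
      have "v (x, 0) = g (-1) + max (x + 1) 0 - (1 + K) * max (x + 1 - a) 0 + K * max x 0"
        by (simp add: v_def R_def heat_ramp_ext_def add_diff_eq)
      then show ?thesis
        using ramp_combination_le_initial[OF a K_def g_min g_lin, of x] sol by (simp add: visc_solution_def)
    qed
  qed (use e p in simp_all)
  then show ?thesis
    by (simp add: v_def R_def)
qed

lemma viscous_solution_lower_bound:
  fixes g :: "real \<Rightarrow> real"
  assumes sol: "visc_solution e g w" and e: "0 < e" "e < 1/4"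
    and g_min: "\<forall>x. g x \<ge> g (-1)" and g_lin: "\<forall>x\<in>{-1..0}. g x \<ge> x + 1 + g (-1)"
  shows "g (-1) + (exp 1 - 1) / (sqrt pi * exp 1) * sqrt e \<le> w (0, 1)"
proof -
  define a where "a = heat_width e 1"
  have a: "0 < a" "a < 1"
    using e real_sqrt_less_mono[of e "1/4"] by (simp_all add: a_def heat_width_def real_sqrt_divide)
  define K where "K = a / (1 - a)"
  have "heat_ramp_ext e d 1 = a * gauss_ramp (d / a)" for d
    by (simp add: heat_ramp_ext_def heat_ramp_def a_def)
  then have "g (-1) + a * (gauss_ramp 0 - (1 + K) * gauss_ramp (- 1) + K * gauss_ramp (- 1 / a)) \<le> w (0, 1)"
    using ramp_combination_le_visc_solution[OF sol e(1) a K_def g_min g_lin, of "(0, 1)"] a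
    by (simp add: algebra_simps)
  moreover have "a * ((1 - exp (- 1)) / (2 * sqrt pi)) = (exp 1 - 1) / (sqrt pi * exp 1) * sqrt e"
    unfolding a_def heat_width_def by (simp add: exp_minus field_simps)
  ultimately show ?thesis
    using mult_left_mono[OF gauss_ramp_combination_ge[OF a K_def], of a] a by simp
qed

theorem proposition4p1:
  fixes g :: "real \<Rightarrow> real"
    and ueps :: "real \<Rightarrow> real \<times> real \<Rightarrow> real"
    and u :: "real \<times> real \<Rightarrow> real"
  assumes lip: "\<exists>L. L-lipschitz_on UNIV g"
    and g_min: "\<forall>x. g x \<ge> g (-1)"
    and g_lin: "\<forall>x\<in>{-1..0}. g x \<ge> x + 1 + g (-1)"
    and ueps_sol: "\<forall>eps>0. visc_solution eps g (ueps eps)"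
    and u_sol: "visc_solution 0 g u"
  shows "\<forall>eps. 0 < eps \<and> eps < 1/4 \<longrightarrow>
           \<bar>ueps eps (0, 1) - u (0, 1)\<bar> = ueps eps (0, 1) - g (-1) \<and>
           ueps eps (0, 1) - g (-1) \<ge> (exp 1 - 1) / (sqrt pi * exp 1) * sqrt eps"
proof (intro allI impI)
  fix eps :: real
  assume eps: "0 < eps \<and> eps < 1/4"
  obtain L where L: "L-lipschitz_on UNIV g"
    using lip by blast
  have "u (0, 1) = g (-1)"
    using transport_visc_solution_eq[OF u_sol L, of "(0, 1)"] by simp
  moreover have "g (-1) + (exp 1 - 1) / (sqrt pi * exp 1) * sqrt eps \<le> ueps eps (0, 1)"
    using viscous_solution_lower_bound[of eps g "ueps eps"] ueps_sol eps g_min g_lin by simp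
  moreover have "0 \<le> (exp 1 - 1) / (sqrt pi * exp 1) * sqrt eps"
    using eps by simp
  ultimately show "\<bar>ueps eps (0, 1) - u (0, 1)\<bar> = ueps eps (0, 1) - g (-1) \<and>
      ueps eps (0, 1) - g (-1) \<ge> (exp 1 - 1) / (sqrt pi * exp 1) * sqrt eps"
    by auto
qed

end
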